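(* Both the unperturbed transition probability function $P$ ($\lambda=0$) and the perturbed transition probability function $P_\lambda$ ($\lambda>0$) of the perturbed learning automata Markov chain have the weak Feller property, i.e., for every bounded continuous $f:\mathcal{Z}\to\mathbb{R}$, the functions $z\mapsto\int_{\mathcal{Z}}P(z,dy)f(y)$ and $z\mapsto\int_{\mathcal{Z}}P_\lambda(z,dy)f(y)$ are continuous on $\mathcal{Z}$.
   Context: Finite game: players $\mathcal{I}=\{1,\dots,n\}$, finite action sets $\mathcal{A}_i$, $\mathcal{A}=\prod_i\mathcal{A}_i$, utilities $u_i:\mathcal{A}\to\mathbb{R}$ with $u_i(\alpha)>0$ for all $i,\alpha$. $\mathcal{X}_i=\Delta(|\mathcal{A}_i|)$ (probability simplex, actions identified with unit vectors $e_{\alpha_i}$), $\mathcal{X}=\prod_i\mathcal{X}_i$, $\mathcal{Z}=\mathcal{A}\times\mathcal{X}$ with the product of the discrete topology on $\mathcal{A}$ and the Euclidean topology on $\mathcal{X}$. Step size $\epsilon>0$ with $0<\epsilon u_i(\alpha)<1$ for all $i,\alpha$. The chain: from $(\alpha(t),x(t))$, each agent $i$ independently selects $\alpha_i(t+1)$ according to $x_i(t)$ with probability $1-\lambda$ and uniformly on $\mathcal{A}_i$ with probability $\lambda$; then $x_i(t+1)=x_i(t)+\epsilon u_i(\alpha(t+1))(e_{\alpha_i(t+1)}-x_i(t))$. $P_\lambda$ is its transition probability function and $P$ the one for $\lambda=0$. *)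

theory Defs
  imports "HOL-Probability.Probability"
begin

(* Players are the elements of a finite type 'i; player i's action set is the
   finite nonempty set A i :: 'a set.  A mixed strategy of player i is a function
   'a => real that is a probability vector supported on A i (the prob_simplex
   Delta(|A_i|), with action a identified with the unit vector e_a). *)

definition prob_simplex :: "'a set \<Rightarrow> ('a \<Rightarrow> real) set" where
  "prob_simplex S = {p. (\<forall>a. 0 \<le> p a) \<and> (\<forall>a. a \<notin> S \<longrightarrow> p a = 0) \<and> sum p S = 1}"

definition profiles :: "('i::finite \<Rightarrow> 'a set) \<Rightarrow> ('i \<Rightarrow> 'a) set" where
  "profiles A = Pi\<^sub>E UNIV A"

definition strategies :: "('i::finite \<Rightarrow> 'a set) \<Rightarrow> ('i \<Rightarrow> 'a \<Rightarrow> real) set" where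
  "strategies A = {x. \<forall>i. x i \<in> prob_simplex (A i)}"

definition Ztop :: "('i::finite \<Rightarrow> 'a set) \<Rightarrow> (('i \<Rightarrow> 'a) \<times> ('i \<Rightarrow> 'a \<Rightarrow> real)) topology" where
  "Ztop A = prod_topology (discrete_topology (profiles A)) (subtopology euclidean (strategies A))"

definition unitv :: "'a \<Rightarrow> 'a \<Rightarrow> real" where
  "unitv a = (\<lambda>b. if b = a then 1 else 0)"

definition select_pmf :: "real \<Rightarrow> 'a set \<Rightarrow> ('a \<Rightarrow> real) \<Rightarrow> 'a pmf" where
  "select_pmf lam S p =
     bind_pmf (bernoulli_pmf lam) (\<lambda>b. if b then pmf_of_set S else embed_pmf p)"

definition update :: "real \<Rightarrow> ('i \<Rightarrow> ('i \<Rightarrow> 'a) \<Rightarrow> real) \<Rightarrow> ('i \<Rightarrow> 'a)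
                      \<Rightarrow> ('i \<Rightarrow> 'a \<Rightarrow> real) \<Rightarrow> ('i \<Rightarrow> 'a \<Rightarrow> real)" where
  "update eps u \<alpha>' x = (\<lambda>i. (\<lambda>b. x i b + eps * u i \<alpha>' * (unitv (\<alpha>' i) b - x i b)))"

(* the transition probability function P_lambda of the perturbed learning automata chain;
   P is P_0 *)
definition PLA_kernel :: "('i::finite \<Rightarrow> 'a set) \<Rightarrow> ('i \<Rightarrow> ('i \<Rightarrow> 'a) \<Rightarrow> real) \<Rightarrow> real \<Rightarrow> real
      \<Rightarrow> ('i \<Rightarrow> 'a) \<times> ('i \<Rightarrow> 'a \<Rightarrow> real) \<Rightarrow> (('i \<Rightarrow> 'a) \<times> ('i \<Rightarrow> 'a \<Rightarrow> real)) pmf" where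
  "PLA_kernel A u eps lam z =
     map_pmf (\<lambda>\<alpha>'. (\<alpha>', update eps u \<alpha>' (snd z)))
       (Pi_pmf UNIV undefined (\<lambda>i. select_pmf lam (A i) (snd z i)))"

definition weak_Feller :: "'z topology \<Rightarrow> ('z \<Rightarrow> 'z pmf) \<Rightarrow> bool" where
  "weak_Feller T K \<longleftrightarrow>
     (\<forall>f. continuous_map T euclideanreal f \<and> bounded (f ` topspace T) \<longrightarrow>
          continuous_map T euclideanreal (\<lambda>z. \<integral>y. f y \<partial>(measure_pmf (K z))))"

end

theory Submission
  imports Defs
begin

text \<open>From a state \<open>(\<alpha>, x)\<close> the chain moves to one of finitely many profiles \<open>\<alpha>'\<close>, with
  probability a product of affine functions of \<open>x\<close>, and then to the state
  \<open>(\<alpha>', update \<alpha>' x)\<close>, which depends continuously on \<open>x\<close>. So integrating \<open>f\<close> against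
  the kernel gives a finite sum of products of continuous functions of the state; the
  discrete topology on profiles makes the dependence on \<open>\<alpha>\<close> irrelevant.\<close>

lemma nn_integral_prob_simplex:
  assumes "p \<in> prob_simplex S" "finite S"
  shows "(\<integral>\<^sup>+x. ennreal (p x) \<partial>count_space UNIV) = 1"
proof -
  have "(\<integral>\<^sup>+x. ennreal (p x) \<partial>count_space UNIV)
        = (\<integral>\<^sup>+x. ennreal (p x) * indicator S x \<partial>count_space UNIV)"
    using assms by (intro nn_integral_cong) (auto simp: prob_simplex_def split: split_indicator)
  also have "\<dots> = (\<integral>\<^sup>+x. ennreal (p x) \<partial>count_space S)"
    by (simp add: nn_integral_count_space_indicator)
  also have "\<dots> = (\<Sum>a\<in>S. ennreal (p a))"
    using assms by (simp add: nn_integral_count_space_finite)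
  also have "\<dots> = ennreal (sum p S)"
    using assms by (intro sum_ennreal) (auto simp: prob_simplex_def)
  finally show ?thesis
    using assms by (simp add: prob_simplex_def)
qed

lemma pmf_select_pmf:
  assumes "p \<in> prob_simplex S" "finite S" "S \<noteq> {}" "0 \<le> lam" "lam \<le> 1"
  shows "pmf (select_pmf lam S p) a = lam * (indicator S a / card S) + (1 - lam) * p a"
proof -
  have "pmf (embed_pmf p) a = p a"
    using assms by (intro pmf_embed_pmf nn_integral_prob_simplex) (auto simp: prob_simplex_def)
  then show ?thesis
    using assms by (simp add: select_pmf_def pmf_bind algebra_simps)
qed

lemma finite_profiles: "(\<And>i. finite (A i)) \<Longrightarrow> finite (profiles A)"
  unfolding profiles_def by (intro finite_PiE) auto

lemma topspace_Ztop: "topspace (Ztop A) = profiles A \<times> strategies A"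
  by (simp add: Ztop_def)

lemma continuous_on_apply_apply: "continuous_on S (\<lambda>x::'i \<Rightarrow> 'a \<Rightarrow> real. x i b)"
proof -
  have "continuous_on UNIV ((\<lambda>y::'a \<Rightarrow> real. y b) \<circ> (\<lambda>x::'i \<Rightarrow> 'a \<Rightarrow> real. x i))"
    by (intro continuous_on_compose continuous_on_subset[OF continuous_on_product_coordinates])
      simp_all
  then show ?thesis
    by (auto simp: o_def intro: continuous_on_subset)
qed

lemma continuous_map_Ztop_snd:
  assumes "continuous_on (strategies A) g"
  shows "continuous_map (Ztop A) euclidean (\<lambda>z. g (snd z))"
proof -
  have "continuous_map (subtopology euclidean (strategies A)) euclidean g"
    using assms by (simp add: continuous_map_iff_continuous)
  then have "continuous_map (Ztop A) euclidean (g \<circ> snd)"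
    unfolding Ztop_def by (intro continuous_map_compose[OF continuous_map_snd])
  then show ?thesis
    by (simp add: o_def)
qed

lemma update_convex_combination:
  "update eps u \<alpha>' x i b = (1 - eps * u i \<alpha>') * x i b + eps * u i \<alpha>' * unitv (\<alpha>' i) b"
  by (simp add: update_def algebra_simps)

lemma update_in_strategies:
  assumes fin: "\<And>i. finite (A i)"
    and step: "\<And>i. 0 \<le> eps * u i \<alpha>' \<and> eps * u i \<alpha>' \<le> 1"
    and \<alpha>': "\<alpha>' \<in> profiles A" and x: "x \<in> strategies A"
  shows "update eps u \<alpha>' x \<in> strategies A"
  unfolding strategies_def prob_simplex_def
proof (intro CollectI allI conjI impI)
  fix i b
  have xi: "x i \<in> prob_simplex (A i)" and \<alpha>'i: "\<alpha>' i \<in> A i"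
    using x \<alpha>' by (auto simp: strategies_def profiles_def)
  show "0 \<le> update eps u \<alpha>' x i b"
    using xi step[of i] unfolding update_convex_combination
    by (auto simp: prob_simplex_def unitv_def)
  show "update eps u \<alpha>' x i b = 0" if "b \<notin> A i"
    using that xi \<alpha>'i by (auto simp: update_def unitv_def prob_simplex_def)
  have "sum (update eps u \<alpha>' x i) (A i)
        = (1 - eps * u i \<alpha>') * sum (x i) (A i) + eps * u i \<alpha>' * sum (unitv (\<alpha>' i)) (A i)"
    unfolding update_convex_combination by (simp add: sum.distrib sum_distrib_left)
  also have "sum (unitv (\<alpha>' i)) (A i) = 1"
    using \<alpha>'i fin[of i] by (simp add: unitv_def)
  finally show "sum (update eps u \<alpha>' x i) (A i) = 1"
    using xi by (simp add: prob_simplex_def)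
qed

lemma continuous_map_Ztop_update:
  assumes fin: "\<And>i. finite (A i)"
    and step: "\<And>i. 0 \<le> eps * u i \<alpha>' \<and> eps * u i \<alpha>' \<le> 1"
    and \<alpha>': "\<alpha>' \<in> profiles A"
  shows "continuous_map (Ztop A) (Ztop A) (\<lambda>z. (\<alpha>', update eps u \<alpha>' (snd z)))"
proof -
  have "continuous_on (strategies A) (update eps u \<alpha>')"
    unfolding update_def
    by (intro continuous_on_coordinatewise_then_product continuous_intros
        continuous_on_apply_apply)
  then have "continuous_map (Ztop A) euclidean (\<lambda>z. update eps u \<alpha>' (snd z))"
    by (rule continuous_map_Ztop_snd)
  then have "continuous_map (Ztop A) (subtopology euclidean (strategies A))
               (\<lambda>z. update eps u \<alpha>' (snd z))"
    using update_in_strategies[of A eps u, OF fin step \<alpha>']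
    by (auto simp: continuous_map_in_subtopology topspace_Ztop)
  then show ?thesis
    using \<alpha>' by (simp add: Ztop_def continuous_map_pairwise o_def)
qed

definition profile_weight ::
    "('i::finite \<Rightarrow> 'a set) \<Rightarrow> real \<Rightarrow> ('i \<Rightarrow> 'a \<Rightarrow> real) \<Rightarrow> ('i \<Rightarrow> 'a) \<Rightarrow> real" where
  "profile_weight A lam x \<alpha>' =
     (\<Prod>i\<in>UNIV. lam * (indicator (A i) (\<alpha>' i) / card (A i)) + (1 - lam) * x i (\<alpha>' i))"

lemma continuous_map_Ztop_profile_weight:
  "continuous_map (Ztop A) euclideanreal (\<lambda>z. profile_weight A lam (snd z) \<alpha>')"
  unfolding profile_weight_def
  by (intro continuous_map_prod finite_UNIV continuous_map_Ztop_snd continuous_intros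
      continuous_on_apply_apply)

lemma integral_PLA_kernel:
  assumes fin: "\<And>i. finite (A i)" and ne: "\<And>i. A i \<noteq> {}"
    and lam: "0 \<le> lam" "lam \<le> 1" and x: "snd z \<in> strategies A"
  shows "(\<integral>y. f y \<partial>measure_pmf (PLA_kernel A u eps lam z)) =
     (\<Sum>\<alpha>'\<in>profiles A. profile_weight A lam (snd z) \<alpha>' * f (\<alpha>', update eps u \<alpha>' (snd z)))"
proof -
  have xi: "snd z i \<in> prob_simplex (A i)" for i
    using x by (simp add: strategies_def)
  let ?M = "Pi_pmf UNIV undefined (\<lambda>i. select_pmf lam (A i) (snd z i))"
  have pmf_M: "pmf ?M \<alpha>' = profile_weight A lam (snd z) \<alpha>'" for \<alpha>'
    by (subst pmf_Pi') (auto simp: profile_weight_def pmf_select_pmf[OF xi fin ne lam])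
  have "\<alpha>' \<in> profiles A" if "\<alpha>' \<in> set_pmf ?M" for \<alpha>'
  proof (rule ccontr)
    assume "\<alpha>' \<notin> profiles A"
    then obtain i where "\<alpha>' i \<notin> A i"
      by (auto simp: profiles_def)
    then have "profile_weight A lam (snd z) \<alpha>' = 0"
      using xi[of i] unfolding profile_weight_def
      by (intro prod_zero bexI[of _ i]) (auto simp: prob_simplex_def)
    then show False
      using that pmf_M[of \<alpha>'] by (simp add: set_pmf_iff)
  qed
  then show ?thesis
    unfolding PLA_kernel_def integral_map_pmf
    by (subst integral_measure_pmf[OF finite_profiles[OF fin]]) (auto simp: pmf_M)
qed

lemma weak_Feller_PLA_kernel:
  fixes A :: "'i::finite \<Rightarrow> 'a set"
  assumes fin: "\<And>i. finite (A i)" and ne: "\<And>i. A i \<noteq> {}"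
    and step: "\<And>i \<alpha>. \<alpha> \<in> profiles A \<Longrightarrow> 0 \<le> eps * u i \<alpha> \<and> eps * u i \<alpha> \<le> 1"
    and lam: "0 \<le> lam" "lam \<le> 1"
  shows "weak_Feller (Ztop A) (PLA_kernel A u eps lam)"
  unfolding weak_Feller_def
proof (intro allI impI)
  fix f :: "('i \<Rightarrow> 'a) \<times> ('i \<Rightarrow> 'a \<Rightarrow> real) \<Rightarrow> real"
  assume "continuous_map (Ztop A) euclideanreal f \<and> bounded (f ` topspace (Ztop A))"
  then have f: "continuous_map (Ztop A) euclideanreal f"
    by simp
  have "continuous_map (Ztop A) euclideanreal (\<lambda>z. \<Sum>\<alpha>'\<in>profiles A.
          profile_weight A lam (snd z) \<alpha>' * f (\<alpha>', update eps u \<alpha>' (snd z)))"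
  proof (intro continuous_map_sum continuous_map_real_mult finite_profiles fin
      continuous_map_Ztop_profile_weight)
    fix \<alpha>' assume \<alpha>': "\<alpha>' \<in> profiles A"
    then show "continuous_map (Ztop A) euclideanreal (\<lambda>z. f (\<alpha>', update eps u \<alpha>' (snd z)))"
      using continuous_map_compose[OF continuous_map_Ztop_update[of A eps u, OF fin step[OF \<alpha>'] \<alpha>'] f]
      by (simp add: o_def)
  qed
  then show "continuous_map (Ztop A) euclideanreal
               (\<lambda>z. \<integral>y. f y \<partial>measure_pmf (PLA_kernel A u eps lam z))"
    by (rule continuous_map_eq) (auto simp: integral_PLA_kernel[OF fin ne lam] topspace_Ztop)
qed

theorem proposition3p1:
  fixes A :: "'i::finite \<Rightarrow> 'a set"
    and u :: "'i \<Rightarrow> ('i \<Rightarrow> 'a) \<Rightarrow> real"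
    and eps :: real
  assumes fin: "\<And>i. finite (A i)"
    and ne: "\<And>i. A i \<noteq> {}"
    and upos: "\<And>i \<alpha>. \<alpha> \<in> profiles A \<Longrightarrow> u i \<alpha> > 0"
    and eps_pos: "eps > 0"
    and eps_u: "\<And>i \<alpha>. \<alpha> \<in> profiles A \<Longrightarrow> 0 < eps * u i \<alpha> \<and> eps * u i \<alpha> < 1"
  shows "weak_Feller (Ztop A) (PLA_kernel A u eps 0)
       \<and> (\<forall>lam. 0 < lam \<and> lam \<le> 1 \<longrightarrow> weak_Feller (Ztop A) (PLA_kernel A u eps lam))"
proof -
  have step: "\<And>i \<alpha>. \<alpha> \<in> profiles A \<Longrightarrow> 0 \<le> eps * u i \<alpha> \<and> eps * u i \<alpha> \<le> 1"
    using eps_u by (meson less_imp_le)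
  show ?thesis
    using weak_Feller_PLA_kernel[of A eps u, OF fin ne step] by auto
qed

end
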